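(* Let $\gamma, \gamma_1$ be disjoint geodesics in $\mathbb{H}^3$ with common orthogonal $\eta$, and let their complex distance be $d_{\mathbb{C}}(\gamma,\gamma_1) = d + i\theta$, where $d>0$ is the length of $\eta$ and $\theta$ is a real representative of the angle, with $\theta \le \pi/2$. Let $P$ be the plane containing $\gamma$ and $\eta$. Let $y_1$ be a point of $\gamma_1$ and let $P_1$ be the plane containing $\gamma$ and $y_1$. Then the dihedral angle between $P$ and $P_1$ is at most $|\theta|/d$.
   Context: The complex distance $d+i\theta$ between two disjoint geodesics with common orthogonal $\eta$ has real part the length of $\eta$ and imaginary part the angle between $\gamma_1$ and the parallel transport along $\eta$ of the tangent direction of $\gamma$. *)

theory Defs
  imports "HOL-Analysis.Analysis"
begin

text \<open>Hyperboloid model of hyperbolic 3-space inside R^4 (coordinate 1 is timelike).\<close>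

definition mink :: "real^4 \<Rightarrow> real^4 \<Rightarrow> real" where
  "mink x y = - (x$1 * y$1) + x$2 * y$2 + x$3 * y$3 + x$4 * y$4"

definition H3 :: "(real^4) set" where
  "H3 = {x. mink x x = -1 \<and> x$1 > 0}"

definition hdist :: "real^4 \<Rightarrow> real^4 \<Rightarrow> real" where
  "hdist x y = arcosh (- mink x y)"

text \<open>The complete geodesic through p with unit tangent vector v at p
  (requires p in H3, mink p v = 0, mink v v = 1).\<close>
definition geod :: "real^4 \<Rightarrow> real^4 \<Rightarrow> (real^4) set" where
  "geod p v = range (\<lambda>t::real. cosh t *\<^sub>R p + sinh t *\<^sub>R v)"

definition hseg :: "real^4 \<Rightarrow> real^4 \<Rightarrow> (real^4) set" where
  "hseg a b = {x \<in> H3. \<exists>\<alpha> \<beta>. \<alpha> \<ge> 0 \<and> \<beta> \<ge> 0 \<and> x = \<alpha> *\<^sub>R a + \<beta> *\<^sub>R b}"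

text \<open>(Unnormalised) tangent vector at a of the geodesic segment from a to b.\<close>
definition seg_dir :: "real^4 \<Rightarrow> real^4 \<Rightarrow> real^4" where
  "seg_dir a b = b + mink a b *\<^sub>R a"

text \<open>Parallel transport along the geodesic from a to b of a tangent vector X at a.\<close>
definition ptrans :: "real^4 \<Rightarrow> real^4 \<Rightarrow> real^4 \<Rightarrow> real^4" where
  "ptrans a b X = X + (mink b X / (1 - mink a b)) *\<^sub>R (a + b)"

definition plane_normal :: "(real^4) set \<Rightarrow> real^4 \<Rightarrow> bool" where
  "plane_normal P n \<longleftrightarrow> mink n n > 0 \<and> P = {x \<in> H3. mink n x = 0}"

definition is_plane :: "(real^4) set \<Rightarrow> bool" where
  "is_plane P \<longleftrightarrow> (\<exists>n. plane_normal P n)"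

definition dihedral_angle :: "(real^4) set \<Rightarrow> (real^4) set \<Rightarrow> real" where
  "dihedral_angle P Q =
     (let n = (SOME n. plane_normal P n); m = (SOME m. plane_normal Q m)
      in arccos (\<bar>mink n m\<bar> / sqrt (mink n n * mink m m)))"

end

theory Submission
  imports Defs
begin

(* In the Lorentz-orthogonal frame a, u, w, n, where w = seg_dir a b is the tangent at a of the
   common perpendicular (<w,w> = sinh^2 d) and n is a normal of P, every normal m of P1 is
   orthogonal to a and u. So m = (A/W) w + (B/N) n with A = <m,w>, B = <m,n>, W = <w,w>,
   N = <n,n>, and tan^2 of the dihedral angle is N A^2 / (W B^2). Moreover u1 = cos theta u + z
   with z a multiple of n and <z,z> = sin^2 theta. That y1 = cosh s b + sinh s u1 lies on P1 reads
   cosh s A = - sinh s <m,z>, and |tanh s| < 1 gives N A^2 <= sin^2 theta B^2. Hence the tangent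
   of the angle is at most |sin theta| / sinh d <= |theta| / d. *)

lemma mink_commute: "mink x y = mink y x"
  unfolding mink_def by simp

lemma mink_add_left: "mink (x + y) z = mink x z + mink y z"
  and mink_add_right: "mink z (x + y) = mink z x + mink z y"
  and mink_diff_left: "mink (x - y) z = mink x z - mink y z"
  and mink_diff_right: "mink z (x - y) = mink z x - mink z y"
  and mink_scaleR_left: "mink (c *\<^sub>R x) z = c * mink x z"
  and mink_scaleR_right: "mink z (c *\<^sub>R x) = c * mink z x"
  and mink_zero_left: "mink 0 z = 0"
  and mink_zero_right: "mink z 0 = 0"
  unfolding mink_def by (simp_all add: algebra_simps)

lemmas mink_bilinear_simps =
  mink_add_left mink_add_right mink_diff_left mink_diff_right
  mink_scaleR_left mink_scaleR_right mink_zero_left mink_zero_right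

lemma mink_orthogonal_expansion:
  assumes "mink p p \<noteq> 0" "mink q q \<noteq> 0" "mink r r \<noteq> 0" "mink n n \<noteq> 0"
    and "mink p q = 0" "mink p r = 0" "mink p n = 0" "mink q r = 0" "mink q n = 0" "mink r n = 0"
  shows "x = (mink x p / mink p p) *\<^sub>R p + (mink x q / mink q q) *\<^sub>R q
           + (mink x r / mink r r) *\<^sub>R r + (mink x n / mink n n) *\<^sub>R n"
    (is "x = ?y")
proof -
  define L :: "real^4 \<Rightarrow> real^4"
    where "L v = (\<chi> i. if i = 1 then mink p v else if i = 2 then mink q v
                              else if i = 3 then mink r v else mink n v)" for v
  have L_nth: "L v $ 1 = mink p v" "L v $ 2 = mink q v" "L v $ 3 = mink r v" "L v $ 4 = mink n v"
    for v
    unfolding L_def by simp_all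
  have orth': "mink q p = 0" "mink r p = 0" "mink n p = 0" "mink r q = 0" "mink n q = 0" "mink n r = 0"
    using assms(5-10) by (simp_all add: mink_commute)
  have "linear L"
    by (rule linearI) (simp_all add: vec_eq_iff forall_4 L_nth mink_bilinear_simps)
  moreover have "surj L"
  proof (rule surjI)
    fix y :: "real^4"
    show "L ((y$1 / mink p p) *\<^sub>R p + (y$2 / mink q q) *\<^sub>R q
           + (y$3 / mink r r) *\<^sub>R r + (y$4 / mink n n) *\<^sub>R n) = y"
      using assms(1-10) orth' by (simp add: vec_eq_iff forall_4 L_nth mink_bilinear_simps)
  qed
  ultimately have "inj L"
    by (rule linear_surj_imp_inj)
  moreover have "L x = L ?y"
    using assms orth' by (simp add: vec_eq_iff forall_4 L_nth mink_bilinear_simps mink_commute)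
  ultimately show ?thesis
    by (simp add: inj_eq)
qed

lemma mink_self_H3: "x \<in> H3 \<Longrightarrow> mink x x = -1"
  unfolding H3_def by simp

(* Reverse Cauchy-Schwarz inequality: (a1 b1)^2 - (1 + <a,b>_E)^2 is a sum of squares. *)
lemma mink_H3_le_neg_one:
  assumes "a \<in> H3" "b \<in> H3"
  shows "mink a b \<le> -1"
proof -
  have a: "a$1^2 = 1 + a$2^2 + a$3^2 + a$4^2" "a$1 > 0" and b: "b$1^2 = 1 + b$2^2 + b$3^2 + b$4^2" "b$1 > 0"
    using assms unfolding H3_def mink_def by (auto simp: power2_eq_square)
  define s where "s = a$2*b$2 + a$3*b$3 + a$4*b$4"
  have "(a$1*b$1)^2 - (1 + s)^2 = (a$2-b$2)^2 + (a$3-b$3)^2 + (a$4-b$4)^2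
     + (a$2*b$3 - a$3*b$2)^2 + (a$2*b$4 - a$4*b$2)^2 + (a$3*b$4 - a$4*b$3)^2"
    unfolding s_def power_mult_distrib a(1) b(1) by (simp add: algebra_simps power2_eq_square)
  also have "\<dots> \<ge> 0"
    by (intro add_nonneg_nonneg zero_le_power2)
  finally have "(1 + s)^2 \<le> (a$1*b$1)^2"
    by simp
  then have "1 + s \<le> a$1*b$1"
    by (rule power2_le_imp_le) (use a(2) b(2) in simp)
  then show ?thesis
    unfolding mink_def s_def by simp
qed

lemma cosh_hdist: "a \<in> H3 \<Longrightarrow> b \<in> H3 \<Longrightarrow> cosh (hdist a b) = - mink a b"
  using mink_H3_le_neg_one[of a b] unfolding hdist_def by simp

lemma mink_seg_dir_left: "a \<in> H3 \<Longrightarrow> mink a (seg_dir a b) = 0"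
  unfolding seg_dir_def by (simp add: mink_bilinear_simps mink_self_H3 mink_commute)

lemma mink_seg_dir_self:
  assumes "a \<in> H3" "b \<in> H3"
  shows "mink (seg_dir a b) (seg_dir a b) = sinh (hdist a b) ^ 2"
proof -
  have "mink (seg_dir a b) (seg_dir a b) = (mink a b)^2 - 1"
    using assms unfolding seg_dir_def
    by (simp add: mink_bilinear_simps mink_self_H3 mink_commute[of b a] power2_eq_square algebra_simps)
  also have "\<dots> = sinh (hdist a b) ^ 2"
    using cosh_hdist[OF assms] cosh_square_eq[of "hdist a b"] by simp
  finally show ?thesis .
qed

lemma plane_normal_orthogonal: "plane_normal P n \<Longrightarrow> x \<in> P \<Longrightarrow> mink n x = 0"
  unfolding plane_normal_def by blast

lemma geod_subset_plane_normal:
  assumes "plane_normal P n" "geod a u \<subseteq> P"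
  shows "mink n a = 0" "mink n u = 0"
proof -
  have "cosh t *\<^sub>R a + sinh t *\<^sub>R u \<in> P" for t
    using assms(2) unfolding geod_def by blast
  from plane_normal_orthogonal[OF assms(1) this] have "mink n (cosh t *\<^sub>R a + sinh t *\<^sub>R u) = 0" for t .
  from this[of 0] this[of 1] show "mink n a = 0" "mink n u = 0"
    by (simp_all add: mink_bilinear_simps)
qed

lemma endpoint_in_hseg:
  assumes "b \<in> H3"
  shows "b \<in> hseg a b"
  unfolding hseg_def using assms by (intro CollectI conjI exI[of _ 0] exI[of _ 1]) simp_all

lemma mink_expansion_perpendicular_frame:
  assumes ab: "a \<in> H3" "b \<in> H3" "hdist a b > 0"
    and u: "mink a u = 0" "mink u u = 1" "mink b u = 0"
    and n: "mink n n > 0" "mink n a = 0" "mink n u = 0" "mink n b = 0"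
  shows "x = (- mink x a) *\<^sub>R a + mink x u *\<^sub>R u
           + (mink x (seg_dir a b) / sinh (hdist a b) ^ 2) *\<^sub>R seg_dir a b
           + (mink x n / mink n n) *\<^sub>R n"
proof -
  have "mink u (seg_dir a b) = 0" "mink n (seg_dir a b) = 0"
    using u n unfolding seg_dir_def by (simp_all add: mink_bilinear_simps mink_commute)
  with assms show ?thesis
    using mink_orthogonal_expansion[of a u "seg_dir a b" n x]
    by (simp add: mink_self_H3 mink_seg_dir_left mink_seg_dir_self mink_commute)
qed

lemma sq_le_of_cosh_sinh_combination:
  fixes A C s :: real
  assumes "cosh s * A + sinh s * C = 0"
  shows "A^2 \<le> C^2"
proof -
  have "cosh s * A = - (sinh s * C)"
    using assms by linarith
  then have "(cosh s)^2 * A^2 = (sinh s)^2 * C^2"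
    by (metis power_mult_distrib power2_minus)
  also have "\<dots> \<le> (cosh s)^2 * C^2"
    using cosh_square_eq[of s] by (simp add: mult_right_mono)
  finally show ?thesis
    using cosh_real_pos[of s] by simp
qed

lemma plane_normals_tilt_bound:
  assumes ab: "a \<in> H3" "b \<in> H3" "hdist a b > 0"
    and u: "mink a u = 0" "mink u u = 1" "mink b u = 0"
    and u1: "mink a u1 = 0" "mink b u1 = 0" "mink u1 u1 = 1"
    and n: "mink n n > 0" "mink n a = 0" "mink n u = 0" "mink n b = 0"
    and m: "mink m a = 0" "mink m u = 0" "mink m (cosh s *\<^sub>R b + sinh s *\<^sub>R u1) = 0"
  shows "(mink n m)^2 \<le> mink n n * mink m m"
    and "mink n n * mink m m - (mink n m)^2
           \<le> (1 - (mink u1 u)^2) / sinh (hdist a b) ^ 2 * (mink n m)^2"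
proof -
  define w W N where "w = seg_dir a b" and "W = sinh (hdist a b) ^ 2" and "N = mink n n"
  have W: "W > 0" and N: "N > 0"
    using ab(3) n(1) unfolding W_def N_def by simp_all
  note expand = mink_expansion_perpendicular_frame[OF ab u n, folded w_def W_def N_def]
  define c z where "c = mink u1 u" and "z = u1 - c *\<^sub>R u"
  have z_n: "z = (mink u1 n / N) *\<^sub>R n"
    using expand[of z] u u1 n unfolding z_def c_def w_def seg_dir_def
    by (simp add: mink_bilinear_simps mink_commute)
  have "1 - c^2 = mink z z"
    using u(2) u1(3) unfolding z_def c_def
    by (simp add: mink_bilinear_simps mink_commute power2_eq_square)
  also have "\<dots> = (mink u1 n)^2 / N"
    using N by (subst (1 2) z_n) (simp add: mink_bilinear_simps N_def power2_eq_square)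
  finally have Z: "(mink u1 n)^2 = N * (1 - c^2)"
    using N by (simp add: field_simps)
  define A B where "A = mink m w" and "B = mink n m"
  have m_wn: "m = (A / W) *\<^sub>R w + (B / N) *\<^sub>R n"
    using expand[of m] m(1,2) unfolding A_def B_def by (simp add: mink_commute)
  have "mink w n = 0"
    using n unfolding w_def seg_dir_def by (simp add: mink_bilinear_simps mink_commute)
  then have "mink m m = A^2 / W + B^2 / N"
    using mink_seg_dir_self[OF ab(1,2)]
    by (subst (1 2) m_wn) (simp add: mink_bilinear_simps mink_commute N_def W_def w_def power2_eq_square)
  then have NM: "N * mink m m - B^2 = N * A^2 / W"
    using N by (simp add: field_simps)
  have m_b: "mink m b = A"
    using m(1) unfolding A_def w_def seg_dir_def by (simp add: mink_bilinear_simps)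
  have "mink m u1 = mink m z"
    using m(2) unfolding z_def by (simp add: mink_bilinear_simps)
  also have "\<dots> = (mink u1 n / N) * B"
    by (subst z_n) (simp add: mink_bilinear_simps B_def mink_commute)
  finally have "cosh s * A + sinh s * ((mink u1 n / N) * B) = 0"
    using m(3) m_b by (simp add: mink_bilinear_simps)
  then have "A^2 \<le> ((mink u1 n / N) * B)^2"
    by (rule sq_le_of_cosh_sinh_combination)
  also have "\<dots> = (1 - c^2) * B^2 / N"
    using N by (simp add: power_mult_distrib power_divide Z) (simp add: power2_eq_square)
  finally have "N * A^2 \<le> (1 - c^2) * B^2"
    using N by (simp add: field_simps)
  then show "mink n n * mink m m - (mink n m)^2 \<le> (1 - c^2) / W * B^2"
    using W unfolding NM[unfolded N_def B_def] by (simp add: field_simps N_def B_def)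
  have "0 \<le> N * A^2 / W"
    using N W by simp
  then show "(mink n m)^2 \<le> mink n n * mink m m"
    using NM unfolding N_def B_def by simp
qed

lemma arccos_le_of_tan_le:
  fixes c T :: real
  assumes c: "0 \<le> c" "c \<le> 1" and T: "0 \<le> T" and tan: "1 - c^2 \<le> T^2 * c^2"
  shows "arccos c \<le> T"
proof -
  define \<alpha> where "\<alpha> = arccos c"
  have "c \<noteq> 0"
    using tan by auto
  then have \<alpha>: "0 \<le> \<alpha>" "\<alpha> < pi / 2"
    using c arccos_lbound arccos_less_arccos[of 0 c] unfolding \<alpha>_def by auto
  have "sin \<alpha> = sqrt (1 - c^2)"
    using c unfolding \<alpha>_def by (simp add: sin_arccos)
  also have "\<dots> \<le> sqrt ((T * c)^2)"
    using tan by (simp add: power_mult_distrib)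
  also have "\<dots> = T * c"
    using T c by simp
  finally have "tan \<alpha> \<le> T"
    using c \<open>c \<noteq> 0\<close> unfolding \<alpha>_def by (simp add: tan_def divide_simps mult.commute)
  have "\<alpha> = arctan (tan \<alpha>)"
    using \<alpha> by (simp add: arctan_tan)
  also have "\<dots> \<le> arctan T"
    using \<open>tan \<alpha> \<le> T\<close> by (simp add: arctan_le_iff)
  also have "\<dots> \<le> T"
    using T by (rule arctan_le_self)
  finally show ?thesis
    unfolding \<alpha>_def .
qed

lemma dihedral_angle_le:
  assumes "is_plane P" "is_plane Q" "0 \<le> T"
    and bound: "\<And>n m. plane_normal P n \<Longrightarrow> plane_normal Q m \<Longrightarrow>
      (mink n m)^2 \<le> mink n n * mink m m \<and>
      mink n n * mink m m - (mink n m)^2 \<le> T^2 * (mink n m)^2"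
  shows "dihedral_angle P Q \<le> T"
proof -
  define n m where "n = (SOME n. plane_normal P n)" and "m = (SOME m. plane_normal Q m)"
  have nm: "plane_normal P n" "plane_normal Q m"
    using assms(1,2) unfolding is_plane_def n_def m_def by (metis someI_ex)+
  define NM c where "NM = mink n n * mink m m" and "c = \<bar>mink n m\<bar> / sqrt NM"
  have NM: "NM > 0"
    using nm unfolding plane_normal_def NM_def by simp
  have c2: "c^2 = (mink n m)^2 / NM"
    using NM unfolding c_def by (simp add: power_divide)
  have "c^2 \<le> 1"
    using bound[OF nm] NM unfolding c2 NM_def by simp
  have "1 - c^2 = (NM - (mink n m)^2) / NM"
    using NM unfolding c2 by (simp add: field_simps)
  also have "\<dots> \<le> T^2 * (mink n m)^2 / NM"
    using bound[OF nm] NM unfolding NM_def by (intro divide_right_mono) simp_all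
  also have "\<dots> = T^2 * c^2"
    unfolding c2 by simp
  finally have "arccos c \<le> T"
    using assms(3) NM \<open>c^2 \<le> 1\<close> by (intro arccos_le_of_tan_le) (auto simp: c_def abs_square_le_1)
  then show ?thesis
    unfolding dihedral_angle_def Let_def c_def NM_def n_def m_def .
qed

lemma sin_div_sinh_sq_le:
  fixes \<theta> d :: real
  assumes "d > 0"
  shows "(sin \<theta>)^2 / (sinh d)^2 \<le> (\<bar>\<theta>\<bar> / d)^2"
proof -
  have "(sin \<theta>)^2 \<le> \<theta>^2"
    using abs_sin_x_le_abs_x[of \<theta>] by (metis abs_ge_zero power2_abs power_mono)
  moreover have "d^2 \<le> (sinh d)^2"
    using real_le_x_sinh[of d] assms by (simp add: sinh_def exp_minus power_mono)
  ultimately show ?thesis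
    using assms by (simp add: power_divide frac_le)
qed

theorem lemma4p5:
  fixes a u b u1 y1 :: "real^4" and d \<theta> :: real
    and \<gamma> \<gamma>1 P P1 :: "(real^4) set"
  assumes a: "a \<in> H3" "mink a u = 0" "mink u u = 1" "\<gamma> = geod a u"
      and b: "b \<in> H3" "mink b u1 = 0" "mink u1 u1 = 1" "\<gamma>1 = geod b u1"
      and disj: "\<gamma> \<inter> \<gamma>1 = {}"
      and orth: "mink (seg_dir a b) u = 0" "mink (seg_dir b a) u1 = 0"
      and cdist: "d = hdist a b" "d > 0" "cos \<theta> = mink u1 (ptrans a b u)" "\<theta> \<le> pi / 2"
      and P: "is_plane P" "\<gamma> \<subseteq> P" "hseg a b \<subseteq> P"
      and P1: "y1 \<in> \<gamma>1" "is_plane P1" "\<gamma> \<subseteq> P1" "y1 \<in> P1"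
  shows "dihedral_angle P P1 \<le> \<bar>\<theta>\<bar> / d"
proof (rule dihedral_angle_le[OF P(1) P1(2)])
  have u_b: "mink b u = 0" and u1_a: "mink a u1 = 0"
    using orth a(2) b(2) unfolding seg_dir_def by (simp_all add: mink_bilinear_simps)
  have sin_\<theta>: "(sin \<theta>)^2 = 1 - (mink u1 u)^2"
    using cdist(3) u_b unfolding sin_squared_eq ptrans_def by (simp add: mink_bilinear_simps mink_commute)
  obtain s where y1: "y1 = cosh s *\<^sub>R b + sinh s *\<^sub>R u1"
    using P1(1) unfolding b(4) geod_def by blast
  fix n m
  assume n: "plane_normal P n" and m: "plane_normal P1 m"
  have n_pos: "mink n n > 0"
    using n unfolding plane_normal_def by simp
  have n_b: "mink n b = 0"
    using plane_normal_orthogonal[OF n] P(3) endpoint_in_hseg[OF b(1)] by blast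
  have m_y1: "mink m (cosh s *\<^sub>R b + sinh s *\<^sub>R u1) = 0"
    using plane_normal_orthogonal[OF m P1(4)] unfolding y1 .
  note tilt = plane_normals_tilt_bound[OF a(1) b(1) cdist(2)[unfolded cdist(1)] a(2,3) u_b
      u1_a b(2,3) n_pos geod_subset_plane_normal[OF n P(2)[unfolded a(4)]] n_b
      geod_subset_plane_normal[OF m P1(3)[unfolded a(4)]] m_y1, folded cdist(1)]
  have "(1 - (mink u1 u)^2) / (sinh d)^2 * (mink n m)^2 \<le> (\<bar>\<theta>\<bar> / d)^2 * (mink n m)^2"
    using sin_div_sinh_sq_le[OF cdist(2), of \<theta>] unfolding sin_\<theta> by (rule mult_right_mono) simp
  with tilt cdist(1) show "(mink n m)^2 \<le> mink n n * mink m m \<and>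
      mink n n * mink m m - (mink n m)^2 \<le> (\<bar>\<theta>\<bar> / d)^2 * (mink n m)^2"
    by auto
next
  show "0 \<le> \<bar>\<theta>\<bar> / d"
    using cdist(2) by simp
qed

end
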